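(* Suppose $f\in L^1_{loc}(\mathbb{R}^n)$ and $x_0,\dots,x_{n+1}\in\mathbb{R}^n$. Then \[ \mathcal{H}^{n+1}(\Delta(F(x_0),\dots,F(x_{n+1})))\le C\,\Omega_f\big(x_0,2\,\mathrm{diam}(x_0,\dots,x_{n+1})\big)\,\mathrm{diam}(x_0,\dots,x_{n+1})^n, \] where $C=C(n)$.
   Context: $F(x)=(x,f(x))\in\mathbb{R}^{n+1}$; $\Delta(\cdot)$ denotes convex hull, $\mathcal{H}^{n+1}$ the $(n+1)$-dimensional Hausdorff measure in $\mathbb{R}^{n+1}$, and $\mathrm{diam}(x_0,\dots,x_{n+1})=\max_{i,j}|x_i-x_j|$. For a locally integrable $f$ and a cube $Q\subset\mathbb{R}^n$, $P_Qf$ denotes the unique affine function with $\int_Q(f-P_Qf)\,dx=0$ and $\int_Q(f-P_Qf)x_i\,dx=0$ for $i=1,\dots,n$. For $x\in\mathbb{R}^n$, $t>0$, $\Omega_f(x,t)=\sup_Q\lVert f-P_Qf\rVert_{L^\infty(Q)}$, the supremum over all cubes $Q\subset\mathbb{R}^n$ of sidelength $t$ with $x\in Q$.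
   Formalization: In $\Omega_f(x,t)$ the quantity $\lVert f-P_Qf\rVert_{L^\infty(Q)}$ is replaced by the pointwise supremum of the absolute value of $f-P_Qf$ over the closed cube Q, not the essential supremum. The statement above fails without it. *)

theory Defs
  imports "HOL-Analysis.Analysis"
begin

definition affine_fun :: "('a::euclidean_space \<Rightarrow> real) \<Rightarrow> bool" where
  "affine_fun g \<longleftrightarrow> (\<exists>c l. g = (\<lambda>x. c + l \<bullet> x))"

definition loc_integrable :: "('a::euclidean_space \<Rightarrow> real) \<Rightarrow> bool" where
  "loc_integrable f \<longleftrightarrow> (\<forall>a b. f absolutely_integrable_on cbox a b)"

definition cube :: "'a::euclidean_space \<Rightarrow> real \<Rightarrow> 'a set" where
  "cube a t = cbox a (a + t *\<^sub>R One)"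

definition PQ :: "('a::euclidean_space \<Rightarrow> real) \<Rightarrow> 'a set \<Rightarrow> ('a \<Rightarrow> real)" where
  "PQ f Q = (THE g. affine_fun g \<and> integral Q (\<lambda>x. f x - g x) = 0 \<and>
       (\<forall>i\<in>Basis. integral Q (\<lambda>x. (f x - g x) * (x \<bullet> i)) = 0))"

text \<open>Omega_f(x,t): sup over cubes Q of sidelength t containing x of sup_Q |f - P_Q f|
  (valued in extended reals, since it may be infinite).\<close>
definition Omega :: "('a::euclidean_space \<Rightarrow> real) \<Rightarrow> 'a \<Rightarrow> real \<Rightarrow> ereal" where
  "Omega f x t = (SUP Q \<in> {cube a t | a. x \<in> cube a t}. SUP y \<in> Q. ereal \<bar>f y - PQ f Q y\<bar>)"

end

theory Submission
  imports Defs
begin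

(* All points x_i lie in the cube Q of sidelength 2d centred at x_0, d the diameter, and
   each F(x_i) is within vertical distance w = Omega_f(x_0, 2d) of the graph of the affine
   function P_Q f.  So their convex hull lies in the convex slab of height 2w over Q, whose
   measure is 2w(2d)^n by Fubini.  P_Q f is indeed affine: the map sending an affine function
   to its moments against 1, x_1, ..., x_n on Q is linear, and injective because every h in
   its kernel satisfies \<integral>_Q h^2 = 0; hence it is bijective. *)

section \<open>The affine projection\<close>

definition affine_of :: "real \<times> 'a \<Rightarrow> 'a::euclidean_space \<Rightarrow> real" where
  "affine_of p x = fst p + snd p \<bullet> x"

lemma affine_fun_iff_affine_of: "affine_fun g \<longleftrightarrow> (\<exists>p. g = affine_of p)"
  unfolding affine_fun_def affine_of_def by fastforce

lemma continuous_on_affine_of [continuous_intros]: "continuous_on S (affine_of p)"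
  unfolding affine_of_def by (intro continuous_intros)

definition moments :: "'a::euclidean_space set \<Rightarrow> ('a \<Rightarrow> real) \<Rightarrow> real \<times> 'a" where
  "moments Q h = (integral Q h, integral Q (\<lambda>x. h x *\<^sub>R x))"

definition moments_integrable :: "'a::euclidean_space set \<Rightarrow> ('a \<Rightarrow> real) \<Rightarrow> bool" where
  "moments_integrable Q h \<longleftrightarrow> h integrable_on Q \<and> (\<lambda>x. h x *\<^sub>R x) integrable_on Q"

lemma moments_integrable_continuous:
  "continuous_on (cbox a b) h \<Longrightarrow> moments_integrable (cbox a b) h"
  unfolding moments_integrable_def by (auto intro!: integrable_continuous continuous_intros)

lemma bilinear_scaleR_flip: "bilinear (\<lambda>(x::'a::real_vector) (r::real). r *\<^sub>R x)"
  unfolding bilinear_def by simp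

lemma moments_integrable_absolutely_integrable:
  fixes h :: "'a::euclidean_space \<Rightarrow> real"
  assumes h: "h absolutely_integrable_on cbox a b"
  shows "moments_integrable (cbox a b) h"
proof -
  have "(\<lambda>x. h x *\<^sub>R x) absolutely_integrable_on cbox a b"
  proof (rule absolutely_integrable_bounded_measurable_product[OF bilinear_scaleR_flip _ _ _ h])
    show "(\<lambda>x. x) \<in> borel_measurable (lebesgue_on (cbox a b))"
      by (intro continuous_imp_measurable_on_sets_lebesgue continuous_on_id) auto
  qed auto
  with h show ?thesis
    unfolding moments_integrable_def by (simp add: absolutely_integrable_on_def)
qed

lemma moments_diff:
  assumes "moments_integrable Q g" "moments_integrable Q h"
  shows "moments Q (\<lambda>x. g x - h x) = moments Q g - moments Q h"
  using assms unfolding moments_integrable_def moments_def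
  by (simp add: integral_diff scaleR_diff_left)

lemma moments_add:
  assumes "moments_integrable Q g" "moments_integrable Q h"
  shows "moments Q (\<lambda>x. g x + h x) = moments Q g + moments Q h"
  using assms unfolding moments_integrable_def moments_def
  by (simp add: integral_add scaleR_add_left)

lemma moments_mult: "moments Q (\<lambda>x. r * h x) = r *\<^sub>R moments Q h"
proof -
  have "integral Q (\<lambda>x. r * h x) = r * integral Q h"
    using integral_cmul[of Q r h] by simp
  moreover have "integral Q (\<lambda>x. (r * h x) *\<^sub>R x) = r *\<^sub>R integral Q (\<lambda>x. h x *\<^sub>R x)"
    using integral_cmul[of Q r "\<lambda>x. h x *\<^sub>R x"] by simp
  ultimately show ?thesis
    by (simp add: moments_def)
qed

lemma moments_eq_0_iff:
  assumes "moments_integrable Q h"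
  shows "moments Q h = 0 \<longleftrightarrow>
    integral Q h = 0 \<and> (\<forall>i\<in>Basis. integral Q (\<lambda>x. h x * (x \<bullet> i)) = 0)"
proof -
  have coord: "integral Q (\<lambda>x. h x * (x \<bullet> i)) = integral Q (\<lambda>x. h x *\<^sub>R x) \<bullet> i" for i
    using assms unfolding moments_integrable_def by (simp flip: integral_component_eq)
  have "integral Q (\<lambda>x. h x *\<^sub>R x) = 0 \<longleftrightarrow> (\<forall>i\<in>Basis. integral Q (\<lambda>x. h x *\<^sub>R x) \<bullet> i = 0)"
    by (rule euclidean_all_zero_iff[symmetric])
  also have "\<dots> \<longleftrightarrow> (\<forall>i\<in>Basis. integral Q (\<lambda>x. h x * (x \<bullet> i)) = 0)"
    by (simp add: coord)
  finally show ?thesis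
    by (simp add: moments_def zero_prod_def)
qed

lemma moments_integrable_diff:
  "moments_integrable Q g \<Longrightarrow> moments_integrable Q h \<Longrightarrow> moments_integrable Q (\<lambda>x. g x - h x)"
  unfolding moments_integrable_def by (auto simp: scaleR_diff_left intro: integrable_diff)

lemma affine_of_eq_0_on_box:
  fixes a b :: "'a::euclidean_space"
  assumes ne: "box a b \<noteq> {}" and zero: "\<And>x. x \<in> cbox a b \<Longrightarrow> affine_of p x = 0"
  shows "p = 0"
proof -
  have ab: "\<forall>i\<in>Basis. a \<bullet> i < b \<bullet> i"
    using ne by (simp add: box_ne_empty)
  then have a: "a \<in> cbox a b"
    by (auto simp: mem_box less_imp_le)
  have "snd p \<bullet> i = 0" if i: "i \<in> Basis" for i
  proof -
    define t where "t = b \<bullet> i - a \<bullet> i"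
    have "a + t *\<^sub>R i \<in> cbox a b"
      using ab i by (auto simp: mem_box t_def inner_add_left inner_Basis less_imp_le)
    then have "affine_of p a + t * (snd p \<bullet> i) = 0"
      using zero[of "a + t *\<^sub>R i"] by (simp add: affine_of_def inner_add_right add.assoc)
    moreover have "t > 0"
      using ab i by (simp add: t_def)
    ultimately show ?thesis
      using zero[OF a] by simp
  qed
  then have "snd p = 0"
    using euclidean_all_zero_iff by blast
  moreover have "fst p = 0"
    using zero[OF a] \<open>snd p = 0\<close> by (simp add: affine_of_def)
  ultimately show ?thesis
    by (simp add: prod_eq_iff)
qed

lemma moments_affine_of_eq_0:
  fixes a b :: "'a::euclidean_space"
  assumes ne: "box a b \<noteq> {}" and m: "moments (cbox a b) (affine_of p) = 0"
  shows "p = 0"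
proof -
  let ?Q = "cbox a b" and ?h = "affine_of p"
  have "moments_integrable ?Q ?h"
    by (intro moments_integrable_continuous continuous_on_affine_of)
  then have h0: "(?h has_integral 0) ?Q" and hx0: "((\<lambda>x. ?h x *\<^sub>R x) has_integral 0) ?Q"
    using m by (auto simp: moments_integrable_def moments_def zero_prod_def has_integral_iff)
  have sq: "?h x * ?h x = fst p * ?h x + (?h x *\<^sub>R x) \<bullet> snd p" for x
    by (simp add: affine_of_def algebra_simps inner_commute)
  have sq_int: "((\<lambda>x. ?h x * ?h x) has_integral 0) ?Q"
    unfolding sq
    using has_integral_add[OF has_integral_mult_right[OF h0, of "fst p"]
        has_integral_linear[OF hx0 bounded_linear_inner_left[of "snd p"]]]
    by (simp add: o_def)
  have cont: "continuous_on ?Q (\<lambda>x. ?h x * ?h x)"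
    by (intro continuous_on_mult continuous_on_affine_of)
  have "?h x * ?h x = 0" if "x \<in> ?Q" for x
    by (rule has_integral_0_cbox_imp_0[OF cont _ sq_int ne that]) simp
  then have "?h x = 0" if "x \<in> ?Q" for x
    using that by simp
  then show ?thesis
    by (rule affine_of_eq_0_on_box[OF ne])
qed

lemma bij_moments_affine_of:
  fixes a b :: "'a::euclidean_space"
  assumes "box a b \<noteq> {}"
  shows "bij (\<lambda>p. moments (cbox a b) (affine_of p))"
proof -
  let ?M = "\<lambda>p. moments (cbox a b) (affine_of p)"
  have mi: "moments_integrable (cbox a b) (affine_of p)" for p
    by (intro moments_integrable_continuous continuous_on_affine_of)
  have lin: "linear ?M"
  proof (rule linearI)
    fix p q :: "real \<times> 'a" and r :: real
    have "affine_of (p + q) = (\<lambda>x. affine_of p x + affine_of q x)"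
      by (auto simp: affine_of_def inner_add_left)
    then show "?M (p + q) = ?M p + ?M q"
      by (simp add: moments_add mi)
    have "affine_of (r *\<^sub>R p) = (\<lambda>x. r * affine_of p x)"
      by (auto simp: affine_of_def algebra_simps)
    then show "?M (r *\<^sub>R p) = r *\<^sub>R ?M p"
      by (simp add: moments_mult)
  qed
  have "inj ?M"
    unfolding linear_injective_0[OF lin] using moments_affine_of_eq_0[OF assms] by blast
  with lin show ?thesis
    by (simp add: bij_def linear_injective_imp_surjective)
qed

lemma PQ_eq_affine_of:
  fixes f :: "'a::euclidean_space \<Rightarrow> real"
  assumes f: "f absolutely_integrable_on cbox a b" and ne: "box a b \<noteq> {}"
    and p: "moments (cbox a b) (affine_of p) = moments (cbox a b) f"
  shows "PQ f (cbox a b) = affine_of p"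
proof -
  let ?Q = "cbox a b"
  have orth_iff: "integral ?Q (\<lambda>x. f x - affine_of q x) = 0 \<and>
      (\<forall>i\<in>Basis. integral ?Q (\<lambda>x. (f x - affine_of q x) * (x \<bullet> i)) = 0)
      \<longleftrightarrow> moments ?Q (affine_of q) = moments ?Q f" for q
  proof -
    have mf: "moments_integrable ?Q f"
      using f by (rule moments_integrable_absolutely_integrable)
    have mq: "moments_integrable ?Q (affine_of q)"
      by (intro moments_integrable_continuous continuous_on_affine_of)
    have "integral ?Q (\<lambda>x. f x - affine_of q x) = 0 \<and>
        (\<forall>i\<in>Basis. integral ?Q (\<lambda>x. (f x - affine_of q x) * (x \<bullet> i)) = 0)
        \<longleftrightarrow> moments ?Q (\<lambda>x. f x - affine_of q x) = 0"
      by (rule moments_eq_0_iff[symmetric]) (rule moments_integrable_diff[OF mf mq])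
    also have "\<dots> \<longleftrightarrow> moments ?Q (affine_of q) = moments ?Q f"
      by (auto simp: moments_diff[OF mf mq])
    finally show ?thesis .
  qed
  have inj: "inj (\<lambda>p. moments ?Q (affine_of p))"
    using bij_moments_affine_of[OF ne] by (rule bij_is_inj)
  show ?thesis
    unfolding PQ_def
  proof (rule the_equality)
    show "affine_fun (affine_of p) \<and> integral ?Q (\<lambda>x. f x - affine_of p x) = 0 \<and>
        (\<forall>i\<in>Basis. integral ?Q (\<lambda>x. (f x - affine_of p x) * (x \<bullet> i)) = 0)"
      using orth_iff[of p] p unfolding affine_fun_iff_affine_of by blast
  next
    fix g assume g: "affine_fun g \<and> integral ?Q (\<lambda>x. f x - g x) = 0 \<and>
        (\<forall>i\<in>Basis. integral ?Q (\<lambda>x. (f x - g x) * (x \<bullet> i)) = 0)"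
    then obtain q where q: "g = affine_of q"
      by (auto simp: affine_fun_iff_affine_of)
    from g have "moments ?Q (affine_of q) = moments ?Q (affine_of p)"
      unfolding q orth_iff p by blast
    then have "q = p"
      by (rule injD[OF inj])
    then show "g = affine_of p"
      using q by simp
  qed
qed

lemma affine_fun_PQ:
  fixes f :: "'a::euclidean_space \<Rightarrow> real"
  assumes "f absolutely_integrable_on cbox a b" and "box a b \<noteq> {}"
  shows "affine_fun (PQ f (cbox a b))"
proof -
  obtain p where "moments (cbox a b) (affine_of p) = moments (cbox a b) f"
    using bij_moments_affine_of[OF assms(2)] by (metis bij_is_surj surjD)
  then have "PQ f (cbox a b) = affine_of p"
    by (rule PQ_eq_affine_of[OF assms])
  then show ?thesis
    unfolding affine_fun_iff_affine_of by blast
qed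

section \<open>Slabs around affine graphs\<close>

definition slab :: "'a set \<Rightarrow> ('a \<Rightarrow> real) \<Rightarrow> real \<Rightarrow> ('a \<times> real) set" where
  "slab Q g w = {p. fst p \<in> Q \<and> \<bar>snd p - g (fst p)\<bar> \<le> w}"

lemma convex_slab:
  fixes g :: "'a::euclidean_space \<Rightarrow> real"
  assumes Q: "convex Q" and g: "affine_fun g"
  shows "convex (slab Q g w)"
proof (rule convexI)
  fix y z :: "'a \<times> real" and u v :: real
  assume y: "y \<in> slab Q g w" and z: "z \<in> slab Q g w" and uv: "0 \<le> u" "0 \<le> v" "u + v = 1"
  obtain p where p: "g = affine_of p"
    using g by (auto simp: affine_fun_iff_affine_of)
  have "g (u *\<^sub>R fst y + v *\<^sub>R fst z) = u * g (fst y) + v * g (fst z)"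
    using uv(3) by (simp add: p affine_of_def inner_add_right algebra_simps flip: distrib_right)
  then have "\<bar>snd (u *\<^sub>R y + v *\<^sub>R z) - g (fst (u *\<^sub>R y + v *\<^sub>R z))\<bar>
      = \<bar>u * (snd y - g (fst y)) + v * (snd z - g (fst z))\<bar>"
    by (simp add: algebra_simps)
  also have "\<dots> \<le> u * w + v * w"
    using y z uv by (intro abs_triangle_ineq[THEN order_trans] add_mono)
      (auto simp: slab_def abs_mult intro: mult_left_mono)
  also have "\<dots> = w"
    using uv(3) by (simp flip: distrib_right)
  finally show "u *\<^sub>R y + v *\<^sub>R z \<in> slab Q g w"
    using y z uv Q by (auto simp: slab_def intro: convexD)
qed

lemma slab_in_sets_borel:
  fixes g :: "'a::euclidean_space \<Rightarrow> real"
  assumes [measurable]: "Q \<in> sets borel" "g \<in> borel_measurable borel"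
  shows "slab Q g w \<in> sets borel"
proof -
  have "Measurable.pred (borel \<Otimes>\<^sub>M borel) (\<lambda>p::'a \<times> real. fst p \<in> Q \<and> \<bar>snd p - g (fst p)\<bar> \<le> w)"
    by measurable
  then have "slab Q g w \<in> sets (borel \<Otimes>\<^sub>M borel)"
    by (simp add: slab_def pred_def space_pair_measure)
  then show ?thesis
    unfolding borel_prod .
qed

lemma emeasure_slab:
  fixes g :: "'a::euclidean_space \<Rightarrow> real"
  assumes Q: "Q \<in> sets borel" and g: "g \<in> borel_measurable borel" and w: "w \<ge> 0"
  shows "emeasure lborel (slab Q g w) = ennreal (2 * w) * emeasure lborel Q"
proof -
  have "slab Q g w \<in> sets (lborel \<Otimes>\<^sub>M lborel)"
    unfolding lborel_prod using slab_in_sets_borel[OF Q g] by simp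
  then have "emeasure lborel (slab Q g w) = (\<integral>\<^sup>+x. emeasure lborel (Pair x -` slab Q g w) \<partial>lborel)"
    by (simp add: lborel_prod[symmetric] lborel.emeasure_pair_measure_alt)
  also have "\<dots> = (\<integral>\<^sup>+x. ennreal (2 * w) * indicator Q x \<partial>lborel)"
  proof (rule nn_integral_cong)
    fix x :: 'a
    have "Pair x -` slab Q g w = (if x \<in> Q then {g x - w .. g x + w} else {})"
      by (auto simp: slab_def)
    then show "emeasure lborel (Pair x -` slab Q g w) = ennreal (2 * w) * indicator Q x"
      using w by (simp add: indicator_def)
  qed
  also have "\<dots> = ennreal (2 * w) * emeasure lborel Q"
    using Q by (simp add: nn_integral_cmult_indicator)
  finally show ?thesis .
qed

lemma emeasure_convex_hull_le_slab:
  fixes g :: "'a::euclidean_space \<Rightarrow> real"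
  assumes Q: "convex Q" "Q \<in> sets borel" and g: "affine_fun g" and w: "w \<ge> 0"
    and S: "S \<subseteq> slab Q g w"
  shows "emeasure lebesgue (convex hull S) \<le> ennreal (2 * w) * emeasure lborel Q"
proof -
  have g_borel: "g \<in> borel_measurable borel"
    using g by (auto simp: affine_fun_def)
  have "convex hull S \<subseteq> slab Q g w"
    using S convex_slab[OF Q(1) g] by (rule hull_minimal)
  then have "emeasure lebesgue (convex hull S) \<le> emeasure lebesgue (slab Q g w)"
    using slab_in_sets_borel[OF Q(2) g_borel] by (intro emeasure_mono) auto
  also have "\<dots> = ennreal (2 * w) * emeasure lborel Q"
    using slab_in_sets_borel[OF Q(2) g_borel] by (simp add: emeasure_slab[OF Q(2) g_borel w])
  finally show ?thesis .
qed

section \<open>Cubes and the oscillation\<close>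

lemma emeasure_cube:
  fixes a :: "'a::euclidean_space"
  assumes "t \<ge> 0"
  shows "emeasure lborel (cube a t) = ennreal (t ^ DIM('a))"
  using assms by (simp add: cube_def emeasure_lborel_cbox_eq inner_add_left)

lemma mem_cube_centered:
  fixes x y :: "'a::euclidean_space"
  assumes "dist y x \<le> r"
  shows "y \<in> cube (x - r *\<^sub>R One) (2 * r)"
  unfolding cube_def mem_box
proof (intro ballI conjI)
  fix i :: 'a assume i: "i \<in> Basis"
  have "\<bar>y \<bullet> i - x \<bullet> i\<bar> \<le> r"
    using Basis_le_norm[OF i, of "y - x"] assms by (simp add: dist_norm inner_diff_left)
  then show "(x - r *\<^sub>R One) \<bullet> i \<le> y \<bullet> i" "y \<bullet> i \<le> (x - r *\<^sub>R One + (2 * r) *\<^sub>R One) \<bullet> i"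
    using i by (simp_all add: inner_diff_left inner_add_left abs_le_iff)
qed

lemma abs_sub_PQ_le_Omega:
  assumes "x \<in> cube a t" "y \<in> cube a t"
  shows "ereal \<bar>f y - PQ f (cube a t) y\<bar> \<le> Omega f x t"
  unfolding Omega_def using assms
  by (intro SUP_upper2[where i = "cube a t"] SUP_upper2[where i = y]) auto

lemma measure_convex_hull_graph_le_Omega:
  fixes f :: "'a::euclidean_space \<Rightarrow> real"
  assumes f: "loc_integrable f" and t: "t > 0" and x: "x \<in> cube a t" and X: "X \<subseteq> cube a t"
  shows "ereal (measure lebesgue (convex hull ((\<lambda>y. (y, f y)) ` X)))
    \<le> ereal (2 * t ^ DIM('a)) * Omega f x t"
proof -
  let ?Q = "cube a t" and ?g = "PQ f (cube a t)"
  have g: "affine_fun ?g"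
    using f t unfolding cube_def loc_integrable_def
    by (intro affine_fun_PQ) (auto simp: box_ne_empty inner_add_left)
  have close: "ereal \<bar>f y - ?g y\<bar> \<le> Omega f x t" if "y \<in> ?Q" for y
    using x that by (rule abs_sub_PQ_le_Omega)
  show ?thesis
  proof (cases "Omega f x t")
    case (real w)
    have w: "w \<ge> 0"
      using close[OF x] real by simp
    have "(\<lambda>y. (y, f y)) ` X \<subseteq> slab ?Q ?g w"
      using X close real by (auto simp: slab_def)
    moreover have "convex ?Q" "?Q \<in> sets borel"
      by (simp_all add: cube_def)
    ultimately have "emeasure lebesgue (convex hull ((\<lambda>y. (y, f y)) ` X))
        \<le> ennreal (2 * w) * emeasure lborel ?Q"
      using w g by (intro emeasure_convex_hull_le_slab)
    also have "\<dots> = ennreal (2 * w * t ^ DIM('a))"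
      using t w by (simp add: emeasure_cube ennreal_mult)
    finally have "measure lebesgue (convex hull ((\<lambda>y. (y, f y)) ` X)) \<le> 2 * w * t ^ DIM('a)"
      unfolding measure_def using t w by (intro enn2real_leI) simp_all
    also have "2 * w * t ^ DIM('a) = 2 * t ^ DIM('a) * w"
      by (simp add: mult_ac)
    finally show ?thesis
      using real by simp
  next
    case PInf
    then show ?thesis
      using t by simp
  next
    case MInf
    then show ?thesis
      using close[OF x] by simp
  qed
qed

lemma measure_convex_hull_graph_le_diameter:
  fixes f :: "'a::euclidean_space \<Rightarrow> real" and x :: "'i \<Rightarrow> 'a"
  assumes f: "loc_integrable f" and bdd: "bounded (x ` I)" and k: "k \<in> I"
  shows "ereal (measure lebesgue (convex hull ((\<lambda>i. (x i, f (x i))) ` I)))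
    \<le> ereal (2 ^ (DIM('a) + 1)) * Omega f (x k) (2 * diameter (x ` I))
        * ereal (diameter (x ` I) ^ DIM('a))"
proof -
  define d where "d = diameter (x ` I)"
  have close: "dist (x i) (x k) \<le> d" if "i \<in> I" for i
    unfolding d_def using bdd that k by (intro diameter_bounded_bound) auto
  have "ereal (measure lebesgue (convex hull ((\<lambda>i. (x i, f (x i))) ` I)))
    \<le> ereal (2 ^ (DIM('a) + 1)) * Omega f (x k) (2 * d) * ereal (d ^ DIM('a))"
  proof (cases "d = 0")
    case True
    \<comment> \<open>The cube degenerates and P_Q f is unspecified, but the hull is a single point.\<close>
    then have "x i = x k" if "i \<in> I" for i
      using close[OF that] by simp
    then have "(\<lambda>i. (x i, f (x i))) ` I = (\<lambda>_. (x k, f (x k))) ` I"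
      by (intro image_cong) auto
    also have "\<dots> = {(x k, f (x k))}"
      using k by auto
    finally have "(\<lambda>i. (x i, f (x i))) ` I = {(x k, f (x k))}" .
    then show ?thesis
      using True
      by (simp add: negligible_imp_measure0 negligible_sing zero_power[OF DIM_positive]
          flip: zero_ereal_def)
  next
    case False
    then have d: "d > 0"
      using close[OF k] by simp
    have X: "x ` I \<subseteq> cube (x k - d *\<^sub>R One) (2 * d)"
      using close by (auto intro: mem_cube_centered)
    have "ereal (measure lebesgue (convex hull ((\<lambda>y. (y, f y)) ` x ` I)))
        \<le> ereal (2 * (2 * d) ^ DIM('a)) * Omega f (x k) (2 * d)"
      using f d k X by (intro measure_convex_hull_graph_le_Omega) auto
    also have "ereal (2 * (2 * d) ^ DIM('a)) = ereal (2 ^ (DIM('a) + 1)) * ereal (d ^ DIM('a))"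
      by (simp add: power_mult_distrib)
    finally show ?thesis
      by (simp only: image_image mult.assoc mult.commute[of "ereal (d ^ DIM('a))"])
  qed
  then show ?thesis
    by (simp only: d_def)
qed

theorem lemma3p2:
  "\<exists>C::real. C > 0 \<and>
     (\<forall>(f::'a::euclidean_space \<Rightarrow> real) (x::nat \<Rightarrow> 'a).
        loc_integrable f \<longrightarrow>
        ereal (measure lebesgue (convex hull ((\<lambda>i. (x i, f (x i))) ` {0..DIM('a)+1})))
          \<le> ereal C * Omega f (x 0) (2 * diameter (x ` {0..DIM('a)+1}))
              * ereal (diameter (x ` {0..DIM('a)+1}) ^ DIM('a)))"
proof (intro exI[where x = "2 ^ (DIM('a) + 1)"] conjI allI impI
    measure_convex_hull_graph_le_diameter[where k = 0])
  show "bounded (x ` {0..DIM('a) + 1})" for x :: "nat \<Rightarrow> 'a"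
    by (intro finite_imp_bounded finite_imageI) simp
qed simp_all

end
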